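(* Let $\pi=N(0,\Sigma)$ on $\mathbb{R}^d$ with positive definite $\Sigma$, $Q=\Sigma^{-1}$ partitioned into blocks $(Q_{ij})_{i,j=1}^s$, and $K=\sqrt Q$ the symmetric square root. For $c\in\mathbb{R}^d$ let $f_c(x)=\exp(\langle c,Kx\rangle-\|c\|^2/2)$. For each block $i$ let $T^{(i)}=I-KD_iK$, where $D_i$ is the $d\times d$ block-diagonal matrix with $(Q_{ii})^{-1}$ in the $i$-th diagonal block and zeros elsewhere. Then for all $c\in\mathbb{R}^d$, $$(Pr_if_c)(x)=f_{T^{(i)}c}(x).$$
   Context: $Pr_i$ is the operator $(Pr_if)(x)=\int f(y_i,x_{-i})\,\pi(dy_i\mid x_{-i})$, i.e. integrating out the block $x_i\in\mathbb{R}^{r_i}$ of $x=(x_1,\dots,x_s)$ against its conditional distribution under $\pi$ given the other blocks. *)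

theory Defs
  imports "HOL-Analysis.Analysis"
begin

definition pos_def_mat :: "real^'n^'n \<Rightarrow> bool" where
  "pos_def_mat A \<longleftrightarrow> transpose A = A \<and> (\<forall>x. x \<noteq> 0 \<longrightarrow> x \<bullet> (A *v x) > 0)"

definition gauss_dens :: "real^'n^'n \<Rightarrow> real^'n \<Rightarrow> real" where
  "gauss_dens Sig x =
     exp (- (x \<bullet> (matrix_inv Sig *v x)) / 2) / sqrt ((2 * pi) ^ CARD('n) * det Sig)"

definition merge_block :: "'n set \<Rightarrow> ('n \<Rightarrow> real) \<Rightarrow> real^'n \<Rightarrow> real^'n" where
  "merge_block I y x = (\<chi> j. if j \<in> I then y j else x $ j)"

text \<open>Pr_I f (x) = integral of f(y_I, x_{-I}) against the conditional law of the block
  x_I given x_{-I} under pi = N(0,Sigma); this conditional law has Lebesgue density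
  (on R^{|I|}) proportional to y_I \<mapsto> gauss_dens Sig (y_I, x_{-I}).\<close>
definition Pr_block :: "real^'n^'n \<Rightarrow> 'n set \<Rightarrow> (real^'n \<Rightarrow> real) \<Rightarrow> real^'n \<Rightarrow> real" where
  "Pr_block Sig I f x =
     (\<integral>y. f (merge_block I y x) * gauss_dens Sig (merge_block I y x) \<partial>(PiM I (\<lambda>_. lborel)))
     / (\<integral>y. gauss_dens Sig (merge_block I y x) \<partial>(PiM I (\<lambda>_. lborel)))"

definition block_inv_embed :: "real^'n^'n \<Rightarrow> 'n set \<Rightarrow> real^'n^'n" where
  "block_inv_embed Q I = (THE D. (\<forall>j k. (j \<notin> I \<or> k \<notin> I) \<longrightarrow> D $ j $ k = 0) \<and>
      (\<forall>j\<in>I. \<forall>k\<in>I. (\<Sum>l\<in>I. D $ j $ l * Q $ l $ k) = (if j = k then 1 else 0)))"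

definition f_c :: "real^'n^'n \<Rightarrow> real^'n \<Rightarrow> real^'n \<Rightarrow> real" where
  "f_c K c x = exp (c \<bullet> (K *v x) - (norm c)^2 / 2)"

end

(* With Q = inverse Sig, the conditional law of the block y = x_I given the other coordinates
   has density proportional to exp (- z.Qz/2), where z = (y, x_{-I}). Completing the square,
   f_c(z) exp (- z.Qz/2) = f_{Tc}(x) exp (- (z-v).Q(z-v)/2) with v = D K c: the linear term in z
   left over is <w, z> with w = Kc - QDKc, and w vanishes on the block I because Q_II D_II = 1
   there, so z may be replaced by x in it. As v is supported on the block, the translation
   y |-> y - v_I preserves Lebesgue measure on R^I, so the numerator of Pr_I f_c is f_{Tc}(x)
   times the normalising integral. *)

theory Submission
  imports Defs "HOL-Probability.Probability"
begin

lemma inner_matrix_vector_mult_transpose: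
  "(x::real^'n) \<bullet> (A *v y) = (transpose A *v x) \<bullet> y"
  by (metis dot_lmul_matrix transpose_matrix_vector)

lemma matrix_inv_inverse:
  fixes A :: "'a::semiring_1^'n^'n"
  assumes "invertible A"
  shows "A ** matrix_inv A = mat 1" "matrix_inv A ** A = mat 1"
  using someI_ex[OF assms[unfolded invertible_def]] by (simp_all add: matrix_inv_def)

lemma pos_def_matD: "pos_def_mat A \<Longrightarrow> x \<noteq> 0 \<Longrightarrow> x \<bullet> (A *v x) > 0"
  by (simp add: pos_def_mat_def)

lemma pos_def_mat_ker: "pos_def_mat A \<Longrightarrow> A *v x = 0 \<Longrightarrow> x = 0"
  by (metis inner_zero_right less_irrefl pos_def_matD)

lemma pos_def_mat_invertible: "pos_def_mat A \<Longrightarrow> invertible A"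
  by (meson invertible_left_inverse matrix_left_invertible_ker pos_def_mat_ker)

lemma pos_def_mat_matrix_inv:
  assumes "pos_def_mat A"
  shows "pos_def_mat (matrix_inv A)"
  unfolding pos_def_mat_def
proof (intro conjI allI impI)
  let ?M = "matrix_inv A"
  have inv: "A ** ?M = mat 1" "?M ** A = mat 1"
    using matrix_inv_inverse pos_def_mat_invertible assms by blast+
  have sym: "transpose A = A" using assms by (simp add: pos_def_mat_def)
  have "transpose ?M ** A = mat 1"
    using arg_cong[OF inv(1), of transpose] by (simp add: matrix_transpose_mul sym)
  then show "transpose ?M = ?M"
    by (metis inv(1) matrix_mul_assoc matrix_mul_lid matrix_mul_rid)
  fix v :: "real^'a" assume "v \<noteq> 0"
  define w where "w = ?M *v v"
  have v: "v = A *v w" by (simp add: w_def matrix_vector_mul_assoc inv)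
  with \<open>v \<noteq> 0\<close> have "w \<noteq> 0" by auto
  have "v \<bullet> (?M *v v) = w \<bullet> (A *v w)"
    by (metis inner_commute v w_def)
  then show "v \<bullet> (?M *v v) > 0" using assms \<open>w \<noteq> 0\<close> by (simp add: pos_def_matD)
qed

definition block_proj :: "'n::finite set \<Rightarrow> real^'n^'n" where
  "block_proj I = (\<chi> j k. if j = k then (if j \<in> I then 1 else 0) else 0)"

lemma block_proj_vector_nth: "(block_proj I *v v) $ j = (if j \<in> I then v $ j else 0)"
  by (simp add: block_proj_def matrix_vector_mult_def if_distrib[of "\<lambda>t. t * _"] cong: if_cong)

lemma block_proj_mult_nth: "(block_proj I ** A) $ j $ k = (if j \<in> I then A $ j $ k else 0)"
  by (simp add: block_proj_def matrix_matrix_mult_def if_distrib[of "\<lambda>t. t * _"] cong: if_cong)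

lemma mult_block_proj_nth: "(A ** block_proj I) $ j $ k = (if k \<in> I then A $ j $ k else 0)"
  by (simp add: block_proj_def matrix_matrix_mult_def if_distrib[of "\<lambda>t. _ * t"] cong: if_cong)

lemma transpose_block_proj: "transpose (block_proj I) = block_proj I"
  by (auto simp: block_proj_def transpose_def vec_eq_iff)

lemma block_proj_idem: "block_proj I ** block_proj I = block_proj I"
  by (simp add: vec_eq_iff block_proj_mult_nth) (simp add: block_proj_def)

lemma inner_block_proj: "x \<bullet> (block_proj I *v y) = (block_proj I *v x) \<bullet> y"
  by (simp add: inner_matrix_vector_mult_transpose transpose_block_proj)

text \<open>The matrix that agrees with \<open>Q\<close> on the \<open>I\<times>I\<close> block and with the identity elsewhere;
  the \<open>I\<times>I\<close> block of its inverse is \<open>(Q\<^sub>I\<^sub>I)\<^sup>-\<^sup>1\<close>.\<close>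
definition block_completion :: "real^'n^'n \<Rightarrow> 'n::finite set \<Rightarrow> real^'n^'n" where
  "block_completion Q I = block_proj I ** Q ** block_proj I + (mat 1 - block_proj I)"

lemma block_completion_nth:
  "block_completion Q I $ l $ k =
     (if l \<in> I \<and> k \<in> I then Q $ l $ k else if l = k \<and> l \<notin> I then 1 else 0)"
  by (simp add: block_completion_def block_proj_mult_nth mult_block_proj_nth)
    (simp add: mat_def block_proj_def)

lemma block_proj_mult_block_completion:
  "block_proj I ** block_completion Q I = block_proj I ** Q ** block_proj I"
  by (auto simp: vec_eq_iff block_proj_mult_nth mult_block_proj_nth block_completion_nth)

lemma pos_def_mat_block_completion:
  assumes "pos_def_mat Q"
  shows "pos_def_mat (block_completion Q I)"
  unfolding pos_def_mat_def
proof (intro conjI allI impI)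
  show "transpose (block_completion Q I) = block_completion Q I"
    using assms unfolding pos_def_mat_def
    by (auto simp: transpose_def vec_eq_iff block_completion_nth dest: arg_cong[of _ _ "\<lambda>A. A $ _ $ _"])
  fix x :: "real^'a" assume "x \<noteq> 0"
  define p where "p = block_proj I *v x"
  have "x \<bullet> (block_completion Q I *v x) = p \<bullet> (Q *v p) + (x \<bullet> x - x \<bullet> p)"
    by (simp add: block_completion_def p_def matrix_vector_mult_add_rdistrib
        matrix_vector_mult_diff_rdistrib matrix_vector_mul_assoc[symmetric] inner_block_proj
        inner_add_right inner_diff_right)
  also have "x \<bullet> x - x \<bullet> p = (x - p) \<bullet> (x - p)"
    using inner_block_proj[of x I p] block_proj_idem[of I]
    by (simp add: p_def matrix_vector_mul_assoc inner_diff_left inner_diff_right inner_commute)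
  finally have eq: "x \<bullet> (block_completion Q I *v x) = p \<bullet> (Q *v p) + (x - p) \<bullet> (x - p)" .
  show "x \<bullet> (block_completion Q I *v x) > 0"
  proof (cases "p = 0")
    case True
    then show ?thesis using \<open>x \<noteq> 0\<close> by (simp add: eq)
  next
    case False
    then have "p \<bullet> (Q *v p) > 0" using assms by (rule pos_def_matD[rotated])
    then show ?thesis by (simp add: eq add_pos_nonneg)
  qed
qed

lemma block_inv_embed_eq:
  assumes "pos_def_mat Q"
  shows "block_inv_embed Q I = block_proj I ** matrix_inv (block_completion Q I) ** block_proj I"
  unfolding block_inv_embed_def
proof (rule the_equality)
  let ?B = "matrix_inv (block_completion Q I)" and ?P = "block_proj I"
  have B: "?B ** block_completion Q I = mat 1" "block_completion Q I ** ?B = mat 1"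
    using matrix_inv_inverse pos_def_mat_invertible pos_def_mat_block_completion assms by blast+
  let ?D = "?P ** ?B ** ?P"
  have "(\<Sum>l\<in>I. ?D $ j $ l * Q $ l $ k) = (if j = k then 1 else 0)" if "j \<in> I" "k \<in> I" for j k
  proof -
    have "(\<Sum>l\<in>I. ?D $ j $ l * Q $ l $ k) = (\<Sum>l\<in>UNIV. if l \<in> I then ?B $ j $ l * Q $ l $ k else 0)"
      using that by (simp add: sum.If_cases block_proj_mult_nth mult_block_proj_nth)
    also have "\<dots> = (?B ** block_completion Q I) $ j $ k"
      unfolding matrix_matrix_mult_def using \<open>k \<in> I\<close> by (auto simp: block_completion_nth intro!: sum.cong)
    finally show ?thesis by (simp add: B mat_def)
  qed
  then show "(\<forall>j k. (j \<notin> I \<or> k \<notin> I) \<longrightarrow> ?D $ j $ k = 0) \<and>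
      (\<forall>j\<in>I. \<forall>k\<in>I. (\<Sum>l\<in>I. ?D $ j $ l * Q $ l $ k) = (if j = k then 1 else 0))"
    by (auto simp: block_proj_mult_nth mult_block_proj_nth)
next
  let ?B = "matrix_inv (block_completion Q I)" and ?P = "block_proj I"
  have B: "block_completion Q I ** ?B = mat 1"
    using matrix_inv_inverse pos_def_mat_invertible pos_def_mat_block_completion assms by blast
  fix D :: "real^'a^'a"
  assume D: "(\<forall>j k. (j \<notin> I \<or> k \<notin> I) \<longrightarrow> D $ j $ k = 0) \<and>
      (\<forall>j\<in>I. \<forall>k\<in>I. (\<Sum>l\<in>I. D $ j $ l * Q $ l $ k) = (if j = k then 1 else 0))"
  have "(D ** block_completion Q I) $ j $ k = ?P $ j $ k" for j k
  proof -
    have "(D ** block_completion Q I) $ j $ k = (\<Sum>l\<in>I. D $ j $ l * block_completion Q I $ l $ k)"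
      unfolding matrix_matrix_mult_def using D by (auto simp: sum.If_cases intro: sum.mono_neutral_right)
    also have "\<dots> = ?P $ j $ k"
      using D by (cases "j \<in> I"; cases "k \<in> I") (auto simp: block_completion_nth block_proj_def)
    finally show ?thesis .
  qed
  then have "D ** block_completion Q I = ?P" by (simp add: vec_eq_iff)
  then have "D = ?P ** ?B" by (metis B matrix_mul_assoc matrix_mul_rid)
  moreover have "D ** ?P = D"
    using D by (auto simp: vec_eq_iff mult_block_proj_nth)
  ultimately show "D = ?P ** ?B ** ?P" by metis
qed

lemma block_inv_embed_props:
  fixes Q :: "real^'n::finite^'n" and I :: "'n set"
  assumes "pos_def_mat Q"
  defines "D \<equiv> block_inv_embed Q I"
  shows "transpose D = D" "D ** Q ** D = D"
    "block_proj I ** Q ** D = block_proj I" "block_proj I ** D = D"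
proof -
  let ?M = "block_completion Q I" and ?P = "block_proj I"
  let ?B = "matrix_inv ?M"
  have B: "?B ** ?M = mat 1" "?M ** ?B = mat 1"
    using matrix_inv_inverse pos_def_mat_invertible pos_def_mat_block_completion assms by blast+
  have "transpose ?B = ?B"
    using pos_def_mat_matrix_inv[OF pos_def_mat_block_completion[OF assms(1)]]
    by (simp add: pos_def_mat_def)
  have D: "D = ?P ** (?B ** ?P)"
    by (simp add: D_def block_inv_embed_eq[OF assms(1)] matrix_mul_assoc)
  have PQP: "?P ** (Q ** (?P ** Y)) = ?P ** (?M ** Y)" for Y :: "real^'n^'n"
    by (metis block_proj_mult_block_completion matrix_mul_assoc)
  have MB: "?M ** (?B ** Y) = Y" for Y :: "real^'n^'n" by (metis B(2) matrix_mul_assoc matrix_mul_lid)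
  have PP: "?P ** (?P ** Y) = ?P ** Y" for Y :: "real^'n^'n" by (metis block_proj_idem matrix_mul_assoc)
  show "transpose D = D"
    by (simp add: D matrix_transpose_mul transpose_block_proj \<open>transpose ?B = ?B\<close> matrix_mul_assoc)
  show "D ** Q ** D = D"
    by (simp add: D matrix_mul_assoc[symmetric] PQP MB PP block_proj_idem)
  show "?P ** Q ** D = ?P"
    by (simp add: D matrix_mul_assoc[symmetric] PQP MB PP block_proj_idem)
  show "?P ** D = D"
    by (simp add: D PP)
qed

definition gauss_kernel :: "real^'n^'n \<Rightarrow> real^'n \<Rightarrow> real" where
  "gauss_kernel Q z = exp (- (z \<bullet> (Q *v z)) / 2)"

lemma gauss_dens_eq_gauss_kernel:
  "gauss_dens Sig z = gauss_kernel (matrix_inv Sig) z / sqrt ((2 * pi) ^ CARD('n) * det Sig)"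
  for Sig :: "real^'n::finite^'n"
  by (simp add: gauss_dens_def gauss_kernel_def)

lemma f_c_mult_gauss_kernel_shift:
  fixes K Q D :: "real^'n::finite^'n"
  assumes K: "transpose K = K" "K ** K = Q"
    and D: "transpose D = D" "D ** Q ** D = D" "block_proj I ** Q ** D = block_proj I"
    and zx: "\<And>j. j \<notin> I \<Longrightarrow> z $ j = x $ j"
  shows "f_c K c z * gauss_kernel Q z
    = f_c K ((mat 1 - K ** D ** K) *v c) x * gauss_kernel Q (z - D *v (K *v c))"
proof -
  define b where "b = K *v c"
  define v where "v = D *v b"
  define w where "w = b - Q *v v"
  have Qsym: "transpose Q = Q" using K by (metis matrix_transpose_mul)
  have inner_K: "u \<bullet> (K *v y) = (K *v u) \<bullet> y" for u y
    by (simp add: inner_matrix_vector_mult_transpose K(1))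
  have "block_proj I *v w = 0"
    by (simp add: w_def v_def matrix_vector_mult_diff_distrib matrix_vector_mul_assoc matrix_mul_assoc D(3))
  moreover have "block_proj I *v (z - x) = z - x"
    using zx by (auto simp: vec_eq_iff block_proj_vector_nth)
  ultimately have wz: "w \<bullet> z = w \<bullet> x"
    by (metis inner_block_proj inner_diff_right inner_zero_left right_minus_eq)
  have vQv: "v \<bullet> (Q *v v) = b \<bullet> v"
    by (metis D(1,2) inner_matrix_vector_mult_transpose matrix_vector_mul_assoc v_def)
  have square: "(z - v) \<bullet> (Q *v (z - v)) = z \<bullet> (Q *v z) - 2 * (z \<bullet> (Q *v v)) + b \<bullet> v"
    using inner_matrix_vector_mult_transpose[of v Q z] Qsym vQv
    by (simp add: matrix_vector_mult_diff_distrib inner_diff_left inner_diff_right inner_commute)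
  have Tc: "(mat 1 - K ** D ** K) *v c = c - K *v v"
    by (simp add: matrix_vector_mult_diff_rdistrib matrix_vector_mul_assoc matrix_mul_assoc v_def b_def)
  have linear: "(c - K *v v) \<bullet> (K *v x) = b \<bullet> z - z \<bullet> (Q *v v)"
    using wz inner_K[of "c - K *v v" x] K(2)
    by (simp add: w_def b_def matrix_vector_mult_diff_distrib matrix_vector_mul_assoc
        inner_diff_left inner_diff_right inner_commute)
  have norm: "(norm (c - K *v v))\<^sup>2 = (norm c)\<^sup>2 - b \<bullet> v"
    using inner_K[of c v] inner_K[of "K *v v" v] vQv K(2)
    by (simp add: power2_norm_eq_inner inner_diff_left inner_diff_right inner_commute
        matrix_vector_mul_assoc b_def)
  have "c \<bullet> (K *v z) - (norm c)\<^sup>2 / 2 - z \<bullet> (Q *v z) / 2 =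
     (c - K *v v) \<bullet> (K *v x) - (norm (c - K *v v))\<^sup>2 / 2 - (z - v) \<bullet> (Q *v (z - v)) / 2"
    using inner_K[of c z] square linear norm by (simp add: b_def field_simps)
  then show ?thesis
    by (simp add: f_c_def gauss_kernel_def Tc mult_exp_exp b_def[symmetric] v_def[symmetric])
qed

lemma measurable_merge_block:
  fixes x :: "real^'n::finite"
  shows "(\<lambda>y. merge_block I y x) \<in> borel_measurable (PiM I (\<lambda>_. lborel))"
proof (rule borel_measurable_euclidean_space[THEN iffD2], rule ballI)
  fix b :: "real^'n" assume "b \<in> Basis"
  then obtain i where b: "b = axis i 1" unfolding Basis_vec_def by auto
  have "merge_block I y x \<bullet> b = (if i \<in> I then y i else x $ i)" for y
    by (simp add: b inner_axis merge_block_def)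
  then show "(\<lambda>y. merge_block I y x \<bullet> b) \<in> borel_measurable (PiM I (\<lambda>_. lborel))"
    by (cases "i \<in> I") simp_all
qed

lemma continuous_on_gauss_kernel: "continuous_on S (gauss_kernel Q)"
  unfolding gauss_kernel_def
  by (intro continuous_intros matrix_vector_mult_linear_continuous_on) simp

lemma borel_measurable_gauss_dens: "gauss_dens Sig \<in> borel_measurable borel"
  unfolding gauss_dens_eq_gauss_kernel[abs_def]
  by (intro borel_measurable_divide borel_measurable_continuous_onI continuous_on_gauss_kernel
      borel_measurable_const)

lemma emeasure_lborel_translate:
  fixes c :: real
  assumes "A \<in> sets lborel"
  shows "emeasure lborel ((+) c -` A) = emeasure lborel A"
proof -
  have "emeasure (distr lborel borel ((+) c)) A = emeasure lborel A"
    by (simp add: lborel_distr_plus)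
  then show ?thesis using assms by (simp add: emeasure_distr)
qed

lemma distr_PiM_lborel_translate:
  fixes u :: "'i \<Rightarrow> real"
  assumes "finite I"
  shows "distr (PiM I (\<lambda>_. lborel)) (PiM I (\<lambda>_. lborel)) (\<lambda>y. \<lambda>j\<in>I. u j + y j)
    = PiM I (\<lambda>_. lborel)"
proof -
  interpret product_sigma_finite "\<lambda>_::'i. lborel"
    by (simp add: product_sigma_finite_def sigma_finite_lborel)
  let ?M = "PiM I (\<lambda>_. lborel)" and ?T = "\<lambda>y. \<lambda>j\<in>I. u j + y j"
  have T: "?T \<in> measurable ?M ?M" by (intro measurable_restrict) simp
  show ?thesis
  proof (rule PiM_eqI)
    fix A :: "'i \<Rightarrow> real set" assume A: "\<And>i. i \<in> I \<Longrightarrow> A i \<in> sets lborel"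
    have "?T -` PiE I A \<inter> space ?M = PiE I (\<lambda>j. (+) (u j) -` A j)"
      by (auto simp: space_PiM PiE_iff extensional_def)
    then have "emeasure (distr ?M ?M ?T) (PiE I A) = emeasure ?M (PiE I (\<lambda>j. (+) (u j) -` A j))"
      using A by (subst emeasure_distr[OF T]) (auto intro!: sets_PiM_I_finite assms)
    also have "\<dots> = (\<Prod>j\<in>I. emeasure lborel (A j))"
      using A assms measurable_sets[of "(+) (u _)" lborel borel "A _"]
      by (subst emeasure_PiM) (auto simp: emeasure_lborel_translate)
    finally show "emeasure (distr ?M ?M ?T) (PiE I A) = (\<Prod>j\<in>I. emeasure lborel (A j))" .
  qed (use assms in simp_all)
qed

lemma integral_merge_block_translate:
  fixes g :: "real^'n::finite \<Rightarrow> real"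
  assumes g: "g \<in> borel_measurable borel" and v: "\<And>j. j \<notin> I \<Longrightarrow> v $ j = 0"
  shows "(\<integral>y. g (merge_block I y x - v) \<partial>PiM I (\<lambda>_. lborel))
    = (\<integral>y. g (merge_block I y x) \<partial>PiM I (\<lambda>_. lborel))"
proof -
  let ?M = "PiM I (\<lambda>_. lborel)" and ?T = "\<lambda>y. \<lambda>j\<in>I. - v $ j + y j"
  have "merge_block I y x - v = merge_block I (?T y) x" for y
    using v by (auto simp: vec_eq_iff merge_block_def)
  then have "(\<integral>y. g (merge_block I y x - v) \<partial>?M) = (\<integral>y. g (merge_block I y x) \<partial>distr ?M ?M ?T)"
    by (simp add: integral_distr measurable_restrict measurable_compose[OF measurable_merge_block g])
  then show ?thesis using distr_PiM_lborel_translate[of I "\<lambda>j. - v $ j"] by simp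
qed

lemma pos_def_mat_coercive:
  fixes Q :: "real^'n::finite^'n"
  assumes "pos_def_mat Q"
  obtains l where "l > 0" "\<And>v. l * (v \<bullet> v) \<le> v \<bullet> (Q *v v)"
proof -
  let ?S = "sphere (0::real^'n) 1"
  have "continuous_on ?S (\<lambda>v. v \<bullet> (Q *v v))"
    by (intro continuous_intros matrix_vector_mult_linear_continuous_on)
  from continuous_attains_inf[OF compact_sphere _ this]
  obtain m where m: "m \<in> ?S" "\<And>v. v \<in> ?S \<Longrightarrow> m \<bullet> (Q *v m) \<le> v \<bullet> (Q *v v)"
    by auto
  have "m \<bullet> (Q *v m) * (v \<bullet> v) \<le> v \<bullet> (Q *v v)" for v
  proof (cases "v = 0")
    case False
    define w where "w = (1 / norm v) *\<^sub>R v"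
    have "w \<in> ?S" using False by (simp add: w_def)
    have v: "v = norm v *\<^sub>R w" using False by (simp add: w_def)
    have "v \<bullet> (Q *v v) = (norm v)\<^sup>2 * (w \<bullet> (Q *v w))"
      by (subst (1 2) v) (simp add: matrix_vector_mult_scaleR power2_eq_square)
    also have "\<dots> \<ge> (norm v)\<^sup>2 * (m \<bullet> (Q *v m))"
      using m(2)[OF \<open>w \<in> ?S\<close>] by (simp add: mult_left_mono)
    finally show ?thesis by (simp add: power2_norm_eq_inner mult.commute)
  qed simp
  moreover have "m \<bullet> (Q *v m) > 0" using m(1) assms by (auto intro: pos_def_matD)
  ultimately show ?thesis using that by blast
qed

lemma integrable_exp_neg_square:
  assumes "a > 0"
  shows "integrable lborel (\<lambda>t::real. exp (- a * t\<^sup>2))"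
proof -
  define s where "s = sqrt (1 / (2 * a))"
  have s: "s > 0" "s\<^sup>2 = 1 / (2 * a)" using assms by (auto simp: s_def)
  have "(\<lambda>t::real. exp (- a * t\<^sup>2)) = (\<lambda>t. sqrt (2 * pi * s\<^sup>2) * normal_density 0 s t)"
    using s assms by (auto simp: fun_eq_iff normal_density_def field_simps)
  then show ?thesis using s(1) by simp
qed

text \<open>Coercivity of \<open>Q\<close> bounds the kernel by a product of one-dimensional Gaussians in the
  free coordinates.\<close>
lemma integrable_gauss_kernel_merge_block:
  fixes Q :: "real^'n::finite^'n"
  assumes "pos_def_mat Q"
  shows "integrable (PiM I (\<lambda>_. lborel)) (\<lambda>y. gauss_kernel Q (merge_block I y x))"
proof -
  interpret product_sigma_finite "\<lambda>_::'n. lborel"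
    by (simp add: product_sigma_finite_def sigma_finite_lborel)
  obtain l where l: "l > 0" "\<And>v. l * (v \<bullet> v) \<le> v \<bullet> (Q *v v)"
    using pos_def_mat_coercive[OF assms] by blast
  have bound: "integrable (PiM I (\<lambda>_. lborel)) (\<lambda>y. \<Prod>j\<in>I. exp (- (l/2) * (y j)\<^sup>2))"
    using l(1) by (intro product_integrable_prod integrable_exp_neg_square) auto
  have meas: "(\<lambda>y. gauss_kernel Q (merge_block I y x)) \<in> borel_measurable (PiM I (\<lambda>_. lborel))"
    by (intro measurable_compose[OF measurable_merge_block] borel_measurable_continuous_onI
        continuous_on_gauss_kernel)
  show ?thesis
  proof (rule Bochner_Integration.integrable_bound[OF bound meas], rule AE_I2)
    fix y :: "'n \<Rightarrow> real"
    let ?z = "merge_block I y x"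
    have "(\<Sum>j\<in>I. (y j)\<^sup>2) = (\<Sum>j\<in>I. (?z $ j)\<^sup>2)"
      by (simp add: merge_block_def)
    also have "\<dots> \<le> (\<Sum>j\<in>UNIV. (?z $ j)\<^sup>2)"
      by (intro sum_mono2) auto
    also have "\<dots> = ?z \<bullet> ?z" by (simp add: inner_vec_def power2_eq_square)
    finally have "l * (\<Sum>j\<in>I. (y j)\<^sup>2) \<le> l * (?z \<bullet> ?z)"
      using l(1) by simp
    also have "\<dots> \<le> ?z \<bullet> (Q *v ?z)" by (rule l(2))
    finally have "l * (\<Sum>j\<in>I. (y j)\<^sup>2) \<le> ?z \<bullet> (Q *v ?z)" .
    then have "gauss_kernel Q ?z \<le> exp (- (l/2) * (\<Sum>j\<in>I. (y j)\<^sup>2))"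
      by (simp add: gauss_kernel_def)
    also have "\<dots> = (\<Prod>j\<in>I. exp (- (l/2) * (y j)\<^sup>2))"
      by (simp add: sum_distrib_left exp_sum)
    finally show "norm (gauss_kernel Q ?z) \<le> norm (\<Prod>j\<in>I. exp (- (l/2) * (y j)\<^sup>2))"
      by (simp add: gauss_kernel_def prod_nonneg)
  qed
qed

lemma integral_gauss_kernel_merge_block_pos:
  fixes Q :: "real^'n::finite^'n"
  assumes "pos_def_mat Q"
  shows "(\<integral>y. gauss_kernel Q (merge_block I y x) \<partial>PiM I (\<lambda>_. lborel)) > 0"
proof -
  interpret product_sigma_finite "\<lambda>_::'n. lborel"
    by (simp add: product_sigma_finite_def sigma_finite_lborel)
  let ?M = "PiM I (\<lambda>_::'n. lborel::real measure)"
  let ?g = "\<lambda>y. gauss_kernel Q (merge_block I y x)"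
  have "emeasure ?M (PiE I (\<lambda>_. {0..1})) = 1"
    by (subst emeasure_PiM) auto
  then have "emeasure ?M (space ?M) \<noteq> 0"
    by (metis emeasure_space not_one_le_zero le_zero_eq)
  then have "\<not> (AE y in ?M. False)"
    by (simp add: eventually_False ae_filter_eq_bot_iff)
  moreover have nonneg: "AE y in ?M. 0 \<le> ?g y"
    by (simp add: gauss_kernel_def)
  moreover have "(AE y in ?M. ?g y = 0) \<longleftrightarrow> (AE y in ?M. False)"
    by (simp add: gauss_kernel_def)
  ultimately show ?thesis
    using integral_nonneg_eq_0_iff_AE[OF integrable_gauss_kernel_merge_block[OF assms] nonneg]
      integral_nonneg_AE[OF nonneg] by linarith
qed

lemma integral_gauss_dens_merge_block_nonzero:
  fixes Sig :: "real^'n::finite^'n"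
  assumes "pos_def_mat Sig"
  shows "(\<integral>y. gauss_dens Sig (merge_block I y x) \<partial>PiM I (\<lambda>_. lborel)) \<noteq> 0"
proof -
  have "det Sig \<noteq> 0"
    using pos_def_mat_invertible[OF assms] by (simp add: invertible_det_nz)
  then show ?thesis
    using integral_gauss_kernel_merge_block_pos[OF pos_def_mat_matrix_inv[OF assms], of I x]
    by (simp add: gauss_dens_eq_gauss_kernel)
qed

theorem Pr_block_f_c:
  fixes Sig K :: "real^'n::finite^'n"
  assumes Sig: "pos_def_mat Sig" and K: "transpose K = K" "K ** K = matrix_inv Sig"
  shows "Pr_block Sig I (f_c K c) x
    = f_c K ((mat 1 - K ** block_inv_embed (matrix_inv Sig) I ** K) *v c) x"
proof -
  define D where "D = block_inv_embed (matrix_inv Sig) I"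
  define F where "F = f_c K ((mat 1 - K ** D ** K) *v c) x"
  define v where "v = D *v (K *v c)"
  let ?M = "PiM I (\<lambda>_::'n. lborel::real measure)"
  let ?g = "\<lambda>y. gauss_dens Sig (merge_block I y x)"
  note D = block_inv_embed_props[OF pos_def_mat_matrix_inv[OF Sig], of I, folded D_def]
  have v_block: "v $ j = 0" if "j \<notin> I" for j
    using that arg_cong[OF D(4), of "\<lambda>A. (A *v (K *v c)) $ j"]
    by (simp add: v_def block_proj_vector_nth matrix_vector_mul_assoc[symmetric])
  have "f_c K c (merge_block I y x) * ?g y = F * gauss_dens Sig (merge_block I y x - v)" for y
    using f_c_mult_gauss_kernel_shift[OF K D(1-3), of "merge_block I y x" x c]
    by (simp add: gauss_dens_eq_gauss_kernel F_def v_def merge_block_def)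
  then have "(\<integral>y. f_c K c (merge_block I y x) * ?g y \<partial>?M) = F * (\<integral>y. ?g y \<partial>?M)"
    by (simp add: integral_merge_block_translate[OF borel_measurable_gauss_dens v_block])
  then show ?thesis
    using integral_gauss_dens_merge_block_nonzero[OF Sig] by (simp add: Pr_block_def F_def D_def)
qed

theorem lemma3:
  fixes Sig K :: "real^'n^'n"
    and s :: nat and blocks :: "nat \<Rightarrow> 'n set"
    and i :: nat and c x :: "real^'n"
  assumes Sig_pd: "pos_def_mat Sig"
    and K_sym: "transpose K = K"
    and K_pd: "pos_def_mat K"
    and K_sqrt: "K ** K = matrix_inv Sig"
    and blocks_nonempty: "\<forall>j\<in>{1..s}. blocks j \<noteq> {}"
    and blocks_disjoint: "\<forall>j\<in>{1..s}. \<forall>k\<in>{1..s}. j \<noteq> k \<longrightarrow> blocks j \<inter> blocks k = {}"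
    and blocks_cover: "(\<Union>j\<in>{1..s}. blocks j) = UNIV"
    and i_block: "i \<in> {1..s}"
  shows "Pr_block Sig (blocks i) (f_c K c) x
         = f_c K ((mat 1 - K ** block_inv_embed (matrix_inv Sig) (blocks i) ** K) *v c) x"
  using Sig_pd K_sym K_sqrt by (rule Pr_block_f_c)

end
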